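(* Let $\mathbf{k}=(k_1,k_2,\ldots)\in\mathcal{T}$ and set $\Delta_r=\zeta^{\star}(k_1,\ldots,k_r,1)-\zeta^{\star}(k_1,\ldots,k_r)$. Then $\lim_{r\to\infty}\Delta_r=0$.
   Context: $\zeta^{\star}(k_1,\ldots,k_r)=\sum_{n_1\geq\cdots\geq n_r\geq 1}\frac{1}{n_1^{k_1}\cdots n_r^{k_r}}$ for $k_1\geq2$, $k_2,\ldots,k_r\geq1$. $\mathcal{T}$ is the set of infinite sequences $(k_1,k_2,\ldots)$ of positive integers with $k_1\geq2$ and such that if $k_1=2$ then $k_s\geq2$ for some $s\geq2$. *)

theory Defs
  imports "HOL-Analysis.Analysis"
begin

definition zeta_star :: "nat list \<Rightarrow> real" where
  "zeta_star ks =
     infsum (\<lambda>ns. 1 / (\<Prod>i<length ks. real (ns ! i) ^ (ks ! i)))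
       {ns. length ns = length ks \<and> sorted_wrt (\<ge>) ns \<and> (\<forall>n\<in>set ns. n \<ge> 1)}"

text \<open>The set T of infinite index sequences, indexed from 0 (k 0 = k_1).\<close>
definition in_T :: "(nat \<Rightarrow> nat) \<Rightarrow> bool" where
  "in_T k \<longleftrightarrow> (\<forall>i. k i \<ge> 1) \<and> k 0 \<ge> 2 \<and> (k 0 = 2 \<longrightarrow> (\<exists>s\<ge>1. k s \<ge> 2))"

end

theory Submission
  imports Defs
begin

text \<open>
  \<open>\<Delta>\<^sub>r\<close> is the part of \<open>\<zeta>\<^sup>\<star>(k\<^sub>1, ..., k\<^sub>r, 1)\<close> whose last summation
  variable is at least 2. Pick \<open>s \<ge> 1\<close> with \<open>k\<^sub>1 + k\<^sub>s\<^sub>+\<^sub>1 \<ge> 4\<close>. For \<open>r > s\<close>,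
  since \<open>n\<^sub>1 \<ge> n\<^sub>s\<^sub>+\<^sub>1\<close>, each summand of \<open>\<Delta>\<^sub>r\<close> is at most
  \<open>1 / (n\<^sub>1\<^sup>2 n\<^sub>s\<^sub>+\<^sub>1\<^sup>2)\<close> times \<open>1 / n\<^sub>i\<close> for every other index. This bound stays
  summable even after summing over all \<open>r\<close> as well: the tails
  \<open>n\<^sub>s\<^sub>+\<^sub>1 \<ge> n\<^sub>s\<^sub>+\<^sub>2 \<ge> ... \<ge> 2\<close> of all lengths contribute at most \<open>n\<^sub>s\<^sub>+\<^sub>1\<close>,
  which cancels one square, and what remains is bounded by \<open>\<Sum>\<^sub>x H\<^sub>x\<^sup>s / x\<^sup>2 < \<infinity>\<close>.
  Hence \<open>\<Sum>\<^sub>r \<Delta>\<^sub>r\<close> converges and \<open>\<Delta>\<^sub>r \<rightarrow> 0\<close>.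
\<close>

definition desc_lists :: "nat \<Rightarrow> nat set \<Rightarrow> nat list set" where
  "desc_lists j A = {ns. length ns = j \<and> sorted_wrt (\<ge>) ns \<and> set ns \<subseteq> A}"

definition zeta_star_term :: "nat list \<Rightarrow> nat list \<Rightarrow> real" where
  "zeta_star_term ks ns = 1 / (\<Prod>i<length ks. real (ns ! i) ^ (ks ! i))"

definition admissible_index :: "nat list \<Rightarrow> bool" where
  "admissible_index ks \<longleftrightarrow> ks \<noteq> [] \<and> 2 \<le> hd ks \<and> (\<forall>k\<in>set ks. 1 \<le> k)"

subsection \<open>Non-increasing lists\<close>

lemma desc_lists_0 [simp]: "desc_lists 0 A = {[]}"
  by (auto simp: desc_lists_def)

lemma desc_lists_Suc:
  "desc_lists (Suc j) A = (\<Union>x\<in>A. (#) x ` desc_lists j (A \<inter> {..x}))"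
proof (rule set_eqI)
  fix ns
  show "ns \<in> desc_lists (Suc j) A \<longleftrightarrow> ns \<in> (\<Union>x\<in>A. (#) x ` desc_lists j (A \<inter> {..x}))"
    by (cases ns) (auto simp: desc_lists_def)
qed

lemma finite_desc_lists: "finite A \<Longrightarrow> finite (desc_lists j A)"
  by (rule finite_subset[OF _ finite_lists_length_eq[of A j]]) (auto simp: desc_lists_def)

lemma desc_lists_mono: "A \<subseteq> B \<Longrightarrow> desc_lists j A \<subseteq> desc_lists j B"
  by (auto simp: desc_lists_def)

lemma desc_lists_nth_mem: "ns \<in> desc_lists j A \<Longrightarrow> i < j \<Longrightarrow> ns ! i \<in> A"
  by (auto simp: desc_lists_def)

lemma desc_lists_nth_antimono: "ns \<in> desc_lists j A \<Longrightarrow> i < i' \<Longrightarrow> i' < j \<Longrightarrow> ns ! i' \<le> ns ! i"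
  by (auto simp: desc_lists_def sorted_wrt_iff_nth_less)

lemma desc_lists_bounded:
  assumes "finite F" "F \<subseteq> desc_lists j {lo..}"
  obtains N where "F \<subseteq> desc_lists j {lo..N}"
proof -
  obtain N where "\<forall>n\<in>(\<Union>ns\<in>F. set ns). n \<le> N"
    using assms(1) finite_nat_set_iff_bounded_le by blast
  with assms(2) have "F \<subseteq> desc_lists j {lo..N}"
    by (fastforce simp: desc_lists_def)
  then show thesis by (rule that)
qed

lemma desc_lists_Suc_split_last:
  "desc_lists (Suc r) {1..} = (\<lambda>ns. ns @ [1]) ` desc_lists r {1..} \<union> desc_lists (Suc r) {2..}"
proof (rule set_eqI)
  fix ns
  show "ns \<in> desc_lists (Suc r) {1..}
    \<longleftrightarrow> ns \<in> (\<lambda>ns. ns @ [1]) ` desc_lists r {1..} \<union> desc_lists (Suc r) {2..}"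
  proof
    assume ns: "ns \<in> desc_lists (Suc r) {1..}"
    then obtain xs y where ns_eq: "ns = xs @ [y]"
      by (cases ns rule: rev_exhaust) (auto simp: desc_lists_def)
    show "ns \<in> (\<lambda>ns. ns @ [1]) ` desc_lists r {1..} \<union> desc_lists (Suc r) {2..}"
    proof (cases "y = 1")
      case True
      with ns have "xs \<in> desc_lists r {1..}"
        unfolding ns_eq by (auto simp: desc_lists_def sorted_wrt_append)
      with True show ?thesis
        unfolding ns_eq by blast
    next
      case False
      with ns have "ns \<in> desc_lists (Suc r) {2..}"
        unfolding ns_eq by (fastforce simp: desc_lists_def sorted_wrt_append)
      then show ?thesis by blast
    qed
  qed (auto simp: desc_lists_def sorted_wrt_append)
qed

lemma sum_desc_lists_Suc:
  "(\<Sum>ns\<in>desc_lists (Suc j) {lo..hi}. F ns) = (\<Sum>x=lo..hi. \<Sum>xs\<in>desc_lists j {lo..x}. F (x # xs))"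
proof -
  have "(\<Sum>ns\<in>desc_lists (Suc j) {lo..hi}. F ns)
      = (\<Sum>x=lo..hi. \<Sum>ns\<in>(#) x ` desc_lists j {lo..x}. F ns)"
    unfolding desc_lists_Suc
    by (subst sum.UNION_disjoint) (auto simp: finite_desc_lists intro!: sum.cong)
  also have "\<dots> = (\<Sum>x=lo..hi. \<Sum>xs\<in>desc_lists j {lo..x}. F (x # xs))"
    by (simp add: sum.reindex)
  finally show ?thesis .
qed

lemma zeta_star_eq_infsum_desc_lists:
  "zeta_star ks = infsum (zeta_star_term ks) (desc_lists (length ks) {1..})"
  unfolding zeta_star_def zeta_star_term_def desc_lists_def by (simp only: subset_iff atLeast_iff Ball_def)

lemma zeta_star_term_nonneg: "0 \<le> zeta_star_term ks ns"
  unfolding zeta_star_term_def by (simp add: prod_nonneg)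

lemma zeta_star_term_Nil [simp]: "zeta_star_term [] ns = 1"
  by (simp add: zeta_star_term_def)

lemma zeta_star_term_Cons: "zeta_star_term (k # ks) (n # ns) = zeta_star_term ks ns / real n ^ k"
  unfolding zeta_star_term_def length_Cons prod.lessThan_Suc_shift by simp

lemma zeta_star_term_append_one:
  "length ns = length ks \<Longrightarrow> zeta_star_term (ks @ [1]) (ns @ [1]) = zeta_star_term ks ns"
  unfolding zeta_star_term_def by (simp add: nth_append)

lemma sum_desc_lists_Suc_zeta_star_term:
  "(\<Sum>ns\<in>desc_lists (Suc j) {lo..hi}. zeta_star_term (e # es) ns)
     = (\<Sum>x=lo..hi. (\<Sum>ns\<in>desc_lists j {lo..x}. zeta_star_term es ns) / real x ^ e)"
  by (simp add: sum_desc_lists_Suc zeta_star_term_Cons sum_divide_distrib)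

lemma sum_sum_desc_lists_Suc_zeta_star_term:
  "(\<Sum>m\<in>M. \<Sum>ns\<in>desc_lists (Suc (j m)) {lo..hi}. zeta_star_term (e # es m) ns)
     = (\<Sum>x=lo..hi. (\<Sum>m\<in>M. \<Sum>ns\<in>desc_lists (j m) {lo..x}. zeta_star_term (es m) ns) / real x ^ e)"
  unfolding sum_desc_lists_Suc_zeta_star_term sum_divide_distrib by (rule sum.swap)

lemma prod_le_prod_except_pair:
  fixes a b :: "'i \<Rightarrow> real"
  assumes "finite I" "p \<in> I" "q \<in> I" "p \<noteq> q"
    and "\<And>i. i \<in> I \<Longrightarrow> 0 \<le> b i" and "b p * b q \<le> a p * a q"
    and "\<And>i. i \<in> I - {p, q} \<Longrightarrow> b i \<le> a i"
  shows "prod b I \<le> prod a I"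
proof -
  have split: "prod f I = f p * f q * prod f (I - {p, q})" for f :: "'i \<Rightarrow> real"
  proof -
    have "prod f I = f p * prod f (I - {p})"
      using assms(1,2) by (rule prod.remove)
    also have "prod f (I - {p}) = f q * prod f (I - {p} - {q})"
      using assms(1,3,4) by (intro prod.remove) auto
    also have "I - {p} - {q} = I - {p, q}"
      by blast
    finally show ?thesis
      by (simp only: mult.assoc)
  qed
  have "0 \<le> b p * b q"
    using assms(2,3,5) by simp
  then have "b p * b q * prod b (I - {p, q}) \<le> a p * a q * prod a (I - {p, q})"
    using assms(5-7) by (intro mult_mono[OF assms(6)] prod_mono prod_nonneg) auto
  then show ?thesis
    unfolding split[of a] split[of b] .
qed

lemma zeta_star_term_le_of_prod_le:
  assumes "length es = length ks" "\<And>i. i < length ks \<Longrightarrow> 0 < ns ! i"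
    and "(\<Prod>i<length ks. real (ns ! i) ^ (es ! i)) \<le> (\<Prod>i<length ks. real (ns ! i) ^ (ks ! i))"
  shows "zeta_star_term ks ns \<le> zeta_star_term es ns"
  unfolding zeta_star_term_def assms(1)
  using assms(2,3) by (intro divide_left_mono mult_pos_pos prod_pos) auto

lemma zeta_star_term_antimono:
  assumes "ns \<in> desc_lists (length ks) {1..}" "length es = length ks"
    and "\<And>i. i < length ks \<Longrightarrow> es ! i \<le> ks ! i"
  shows "zeta_star_term ks ns \<le> zeta_star_term es ns"
proof (rule zeta_star_term_le_of_prod_le)
  have "1 \<le> ns ! i" if "i < length ks" for i
    using desc_lists_nth_mem[OF assms(1) that] by simp
  then show "0 < ns ! i" if "i < length ks" for i
    using that by fastforce
  show "(\<Prod>i<length ks. real (ns ! i) ^ (es ! i)) \<le> (\<Prod>i<length ks. real (ns ! i) ^ (ks ! i))"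
    using \<open>\<And>i. i < length ks \<Longrightarrow> 1 \<le> ns ! i\<close> assms(3)
    by (intro prod_mono) (auto intro: power_increasing)
qed (fact assms(2))

lemma power2_mult_power2_le:
  fixes x y :: real
  assumes "1 \<le> y" "y \<le> x" "2 \<le> a" "1 \<le> b" "4 \<le> a + b"
  shows "x ^ 2 * y ^ 2 \<le> x ^ a * y ^ b"
proof (cases "2 \<le> b")
  case True
  with assms show ?thesis
    by (intro mult_mono power_increasing) auto
next
  case False
  with assms have "b = 1" "3 \<le> a" by auto
  have "x ^ 2 * y ^ 2 \<le> x ^ 2 * (x * y)"
    using assms by (intro mult_left_mono) (auto simp: power2_eq_square intro: mult_right_mono)
  also have "\<dots> = x ^ 3 * y"
    by (simp add: power_numeral_reduce)
  also have "\<dots> \<le> x ^ a * y"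
    using assms \<open>3 \<le> a\<close> by (intro mult_right_mono power_increasing) auto
  finally show ?thesis
    using \<open>b = 1\<close> by simp
qed

lemma zeta_star_term_le_pair:
  assumes ns: "ns \<in> desc_lists (length ks) {1..}" and "p < q" "q < length ks"
    and ks: "\<forall>k\<in>set ks. 1 \<le> k" "2 \<le> ks ! p" "4 \<le> ks ! p + ks ! q"
    and es: "length es = length ks" "\<And>i. i < length ks \<Longrightarrow> es ! i = (if i = p \<or> i = q then 2 else 1)"
  shows "zeta_star_term ks ns \<le> zeta_star_term es ns"
proof (rule zeta_star_term_le_of_prod_le)
  have ge1: "1 \<le> real (ns ! i)" if "i < length ks" for i
    using desc_lists_nth_mem[OF ns that] by simp
  then show "0 < ns ! i" if "i < length ks" for i
    using that by fastforce
  have esp: "es ! p = 2" "es ! q = 2"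
    using es(2) \<open>p < q\<close> \<open>q < length ks\<close> by auto
  have pair: "real (ns ! p) ^ (es ! p) * real (ns ! q) ^ (es ! q)
      \<le> real (ns ! p) ^ (ks ! p) * real (ns ! q) ^ (ks ! q)"
    unfolding esp
  proof (rule power2_mult_power2_le)
    show "1 \<le> real (ns ! q)" "real (ns ! q) \<le> real (ns ! p)"
      using ge1 desc_lists_nth_antimono[OF ns \<open>p < q\<close> \<open>q < length ks\<close>] \<open>q < length ks\<close>
      by auto
    show "1 \<le> ks ! q"
      using ks(1) \<open>q < length ks\<close> by (simp add: nth_mem)
  qed (use ks in auto)
  have rest: "real (ns ! i) ^ (es ! i) \<le> real (ns ! i) ^ (ks ! i)"
    if "i \<in> {..<length ks} - {p, q}" for i
  proof -
    from that have i: "i < length ks" "es ! i = 1"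
      using es(2) by auto
    with ks(1) have "1 \<le> ks ! i"
      by (simp add: nth_mem)
    with i ge1 show ?thesis
      by (metis power_increasing power_one_right)
  qed
  show "(\<Prod>i<length ks. real (ns ! i) ^ (es ! i)) \<le> (\<Prod>i<length ks. real (ns ! i) ^ (ks ! i))"
    by (rule prod_le_prod_except_pair[OF _ _ _ _ _ pair rest])
      (use \<open>p < q\<close> \<open>q < length ks\<close> in auto)
qed (fact es(1))

lemma zeta_star_term_le_two_squares:
  assumes k: "\<forall>i. 1 \<le> k i" "2 \<le> k 0" "4 \<le> k 0 + k (Suc t)"
    and ns: "ns \<in> desc_lists (Suc (Suc t + Suc m)) {1..}"
  shows "zeta_star_term (map k [0..<Suc t + Suc m] @ [1]) ns
    \<le> zeta_star_term (2 # replicate t 1 @ 2 # replicate (Suc m) 1) ns"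
proof (rule zeta_star_term_le_pair[where p = 0 and q = "Suc t"])
  let ?ks = "map k [0..<Suc t + Suc m] @ [1]"
  show "ns \<in> desc_lists (length ?ks) {1..}"
    using ns by simp
  show "(2 # replicate t 1 @ 2 # replicate (Suc m) 1) ! i = (if i = 0 \<or> i = Suc t then 2 else 1)"
    if "i < length ?ks" for i
    using that by (cases i) (auto simp: nth_append nth_Cons')
  have "?ks ! i = k i" if "i \<le> Suc t" for i
    using that by (simp add: nth_append del: upt_Suc)
  then show "2 \<le> ?ks ! 0" "4 \<le> ?ks ! 0 + ?ks ! Suc t"
    using k by simp_all
qed (use k in auto)

subsection \<open>Harmonic-number bounds\<close>

lemma sum_harm_power_div_le: "(\<Sum>y\<le>x. harm y ^ p / real y) \<le> (harm x :: real) ^ Suc p"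
proof (induction x)
  case 0
  then show ?case by (simp add: harm_expand)
next
  case (Suc x)
  have "harm x ^ Suc p \<le> harm (Suc x) ^ p * (harm x :: real)"
    unfolding power_Suc2 by (intro mult_right_mono power_mono harm_mono harm_nonneg) auto
  with Suc.IH have "(\<Sum>y\<le>Suc x. harm y ^ p / real y)
      \<le> harm (Suc x) ^ p * harm x + harm (Suc x) ^ p / real (Suc x)"
    by simp
  also have "\<dots> = harm (Suc x) ^ p * (harm x + inverse (real (Suc x)))"
    by (simp add: distrib_left divide_inverse)
  also have "\<dots> = harm (Suc x) ^ Suc p"
    by (simp only: harm_Suc[symmetric] power_Suc2)
  finally show ?case .
qed

lemma harm_le_powr:
  assumes "0 < a" "1 \<le> n"
  shows "(harm n :: real) \<le> (1 + 1 / a) * real n powr a"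
proof -
  have "harm n - ln (real n) \<le> harm 1 - ln (real 1)"
    using euler_mascheroni_sequence_decreasing[of 1 n] assms by simp
  then have "harm n \<le> 1 + ln (real n)"
    by (simp add: harm_expand)
  also have "\<dots> \<le> real n powr a + real n powr a / a"
    using ln_powr_bound[of "real n" a] ge_one_powr_ge_zero[of "real n" a] assms by simp
  finally show ?thesis
    by (simp add: algebra_simps)
qed

lemma summable_harm_power_div_square: "summable (\<lambda>n. (harm n :: real) ^ p / real n ^ 2)"
proof -
  define C :: real where "C = (1 + 2 * real p) ^ p"
  have harm_power_le: "harm n ^ p \<le> C * real n powr (1 / 2)" if "1 \<le> n" for n
  proof (cases "p = 0")
    case True
    with that show ?thesis by (simp add: C_def ge_one_powr_ge_zero)
  next
    case False
    have "harm n ^ p \<le> ((1 + 2 * real p) * real n powr (1 / (2 * real p))) ^ p"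
      using harm_le_powr[of "1 / (2 * real p)" n] False that
      by (intro power_mono) (simp_all add: harm_nonneg)
    also have "\<dots> = C * real n powr (1 / 2)"
      using False that by (simp add: C_def power_mult_distrib powr_power)
    finally show ?thesis .
  qed
  have bound: "norm (harm n ^ p / real n ^ 2) \<le> C * real n powr (-3 / 2)" if "n \<ge> 1" for n
  proof -
    have "norm (harm n ^ p / real n ^ 2) \<le> C * real n powr (1 / 2) / real n ^ 2"
      using harm_power_le[OF that] by (simp add: harm_nonneg divide_right_mono)
    also have "\<dots> = C * real n powr (-3 / 2)"
    proof -
      have "real n powr (1 / 2 - 2) = real n powr (1 / 2) / real n powr 2"
        by (rule powr_diff)
      then show ?thesis by simp
    qed
    finally show ?thesis .
  qed
  have "summable (\<lambda>n. C * real n powr (-3 / 2))"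
    by (intro summable_mult) (simp add: summable_real_powr_iff)
  then show ?thesis
    using bound by (rule summable_comparison_test')
qed

lemma sum_desc_lists_recip_le_harm_power:
  "(\<Sum>ns\<in>desc_lists j {lo..x}. zeta_star_term (replicate j 1) ns) \<le> (harm x :: real) ^ j"
proof (induction j arbitrary: x)
  case 0
  then show ?case by simp
next
  case (Suc j)
  have "(\<Sum>ns\<in>desc_lists (Suc j) {lo..x}. zeta_star_term (replicate (Suc j) 1) ns)
      \<le> (\<Sum>y=lo..x. harm y ^ j / real y)"
    unfolding replicate_Suc sum_desc_lists_Suc_zeta_star_term power_one_right
    by (intro sum_mono divide_right_mono Suc.IH) simp
  also have "\<dots> \<le> (\<Sum>y\<le>x. harm y ^ j / real y)"
    by (intro sum_mono2) (auto simp: harm_nonneg)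
  also have "\<dots> \<le> harm x ^ Suc j"
    by (rule sum_harm_power_div_le)
  finally show ?case .
qed

text \<open>The bound is sharp: the full series equals \<open>\<Prod>y=2..x. (1 - 1/y)\<inverse> = x\<close>.\<close>
lemma sum_desc_lists_from_two_recip_le:
  "1 \<le> x \<Longrightarrow> (\<Sum>j\<le>J. \<Sum>ns\<in>desc_lists j {2..x}. zeta_star_term (replicate j 1) ns) \<le> real x"
proof (induction J arbitrary: x)
  case 0
  then show ?case by simp
next
  case (Suc J)
  have "(\<Sum>j\<le>J. \<Sum>ns\<in>desc_lists (Suc j) {2..x}. zeta_star_term (replicate (Suc j) 1) ns)
      = (\<Sum>y=2..x. (\<Sum>j\<le>J. \<Sum>ns\<in>desc_lists j {2..y}. zeta_star_term (replicate j 1) ns) / real y)"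
    unfolding replicate_Suc sum_sum_desc_lists_Suc_zeta_star_term power_one_right ..
  also have "\<dots> \<le> (\<Sum>y=2..x. real y / real y)"
    by (intro sum_mono divide_right_mono Suc.IH) auto
  also have "\<dots> = real x - 1"
    using Suc.prems by simp
  finally show ?case
    unfolding sum.atMost_Suc_shift by simp
qed

lemma sum_desc_lists_one_square_le:
  "(\<Sum>m\<le>J. \<Sum>ns\<in>desc_lists (t + Suc m) {2..x}. zeta_star_term (replicate t 1 @ 2 # replicate m 1) ns)
     \<le> (harm x :: real) ^ Suc t"
proof (induction t arbitrary: x)
  case 0
  have "(\<Sum>m\<le>J. \<Sum>ns\<in>desc_lists (Suc m) {2..x}. zeta_star_term (2 # replicate m 1) ns)
      = (\<Sum>y=2..x. (\<Sum>m\<le>J. \<Sum>ns\<in>desc_lists m {2..y}. zeta_star_term (replicate m 1) ns)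
          / real y ^ 2)"
    by (rule sum_sum_desc_lists_Suc_zeta_star_term)
  also have "\<dots> \<le> (\<Sum>y=2..x. real y / real y ^ 2)"
    by (intro sum_mono divide_right_mono sum_desc_lists_from_two_recip_le) auto
  also have "\<dots> = (\<Sum>y=2..x. harm y ^ 0 / real y)"
    by (intro sum.cong) (simp_all add: power2_eq_square)
  also have "\<dots> \<le> (\<Sum>y\<le>x. harm y ^ 0 / real y)"
    by (intro sum_mono2) auto
  also have "\<dots> \<le> harm x ^ Suc 0"
    by (rule sum_harm_power_div_le)
  finally show ?case by simp
next
  case (Suc t)
  have "(\<Sum>m\<le>J. \<Sum>ns\<in>desc_lists (Suc t + Suc m) {2..x}.
          zeta_star_term (replicate (Suc t) 1 @ 2 # replicate m 1) ns)
      = (\<Sum>y=2..x. (\<Sum>m\<le>J. \<Sum>ns\<in>desc_lists (t + Suc m) {2..y}.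
          zeta_star_term (replicate t 1 @ 2 # replicate m 1) ns) / real y)"
    unfolding add_Suc replicate_Suc append_Cons sum_sum_desc_lists_Suc_zeta_star_term power_one_right ..
  also have "\<dots> \<le> (\<Sum>y=2..x. harm y ^ Suc t / real y)"
    by (intro sum_mono divide_right_mono Suc.IH) simp
  also have "\<dots> \<le> (\<Sum>y\<le>x. harm y ^ Suc t / real y)"
    by (intro sum_mono2) (auto simp: harm_nonneg)
  also have "\<dots> \<le> harm x ^ Suc (Suc t)"
    by (rule sum_harm_power_div_le)
  finally show ?case .
qed

lemma sum_desc_lists_two_squares_le:
  "(\<Sum>m\<le>M. \<Sum>ns\<in>desc_lists (Suc (Suc t + Suc m)) {2..N}.
      zeta_star_term (2 # replicate t 1 @ 2 # replicate (Suc m) 1) ns)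
     \<le> (\<Sum>x. (harm x :: real) ^ Suc t / real x ^ 2)"
proof -
  define g where "g m x = (\<Sum>ns\<in>desc_lists (t + Suc m) {2..x}.
      zeta_star_term (replicate t 1 @ 2 # replicate m 1) ns)" for m x
  have "(\<Sum>m\<le>M. \<Sum>ns\<in>desc_lists (Suc (Suc t + Suc m)) {2..N}.
      zeta_star_term (2 # replicate t 1 @ 2 # replicate (Suc m) 1) ns)
      = (\<Sum>x=2..N. (\<Sum>m\<le>M. g (Suc m) x) / real x ^ 2)"
    unfolding sum_sum_desc_lists_Suc_zeta_star_term g_def by simp
  also have "\<dots> \<le> (\<Sum>x=2..N. harm x ^ Suc t / real x ^ 2)"
  proof (intro sum_mono divide_right_mono)
    fix x
    have "0 \<le> g 0 x"
      unfolding g_def by (intro sum_nonneg zeta_star_term_nonneg)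
    then have "(\<Sum>m\<le>M. g (Suc m) x) \<le> (\<Sum>m\<le>Suc M. g m x)"
      unfolding sum.atMost_Suc_shift by simp
    also have "\<dots> \<le> harm x ^ Suc t"
      unfolding g_def by (rule sum_desc_lists_one_square_le)
    finally show "(\<Sum>m\<le>M. g (Suc m) x) \<le> harm x ^ Suc t" .
  qed simp
  also have "\<dots> \<le> (\<Sum>x. harm x ^ Suc t / real x ^ 2)"
    by (intro sum_le_suminf summable_harm_power_div_square) (auto simp: harm_nonneg)
  finally show ?thesis .
qed

lemma summable_on_desc_lists_if_bounded:
  fixes f :: "nat list \<Rightarrow> real"
  assumes "\<And>ns. 0 \<le> f ns" "\<And>N. (\<Sum>ns\<in>desc_lists j {lo..N}. f ns) \<le> B"
  shows "f summable_on desc_lists j {lo..}"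
proof (rule nonneg_bdd_above_summable_on)
  have "sum f F \<le> B" if F: "finite F" "F \<subseteq> desc_lists j {lo..}" for F
  proof -
    obtain N where "F \<subseteq> desc_lists j {lo..N}"
      using desc_lists_bounded[OF F] .
    then have "sum f F \<le> (\<Sum>ns\<in>desc_lists j {lo..N}. f ns)"
      by (intro sum_mono2 finite_desc_lists assms(1)) simp_all
    also have "\<dots> \<le> B"
      by (rule assms(2))
    finally show ?thesis .
  qed
  then show "bdd_above (sum f ` {F. F \<subseteq> desc_lists j {lo..} \<and> finite F})"
    by (intro bdd_aboveI2) blast
qed (rule assms(1))

lemma summable_infsum_desc_lists_if_bounded:
  fixes f :: "nat \<Rightarrow> nat list \<Rightarrow> real"
  assumes "\<And>m ns. 0 \<le> f m ns" "\<And>m. f m summable_on desc_lists (j m) {lo..}"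
    and "\<And>M N. (\<Sum>m\<le>M. \<Sum>ns\<in>desc_lists (j m) {lo..N}. f m ns) \<le> B"
  shows "summable (\<lambda>m. infsum (f m) (desc_lists (j m) {lo..}))"
proof -
  let ?g = "\<lambda>(m, ns). f m ns"
  let ?S = "Sigma UNIV (\<lambda>m. desc_lists (j m) {lo..})"
  have "sum ?g F \<le> B" if F: "finite F" "F \<subseteq> ?S" for F
  proof -
    obtain M where M: "\<forall>m\<in>fst ` F. m \<le> M"
      using F(1) finite_nat_set_iff_bounded_le by blast
    obtain N where N: "\<forall>n\<in>(\<Union>ns\<in>snd ` F. set ns). n \<le> N"
      using F(1) finite_nat_set_iff_bounded_le by blast
    have sub: "F \<subseteq> Sigma {..M} (\<lambda>m. desc_lists (j m) {lo..N})"
      using F(2) M N by (fastforce simp: desc_lists_def)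
    have "sum ?g F \<le> sum ?g (Sigma {..M} (\<lambda>m. desc_lists (j m) {lo..N}))"
      by (rule sum_mono2[OF _ sub]) (auto intro!: finite_SigmaI finite_desc_lists simp: assms(1))
    also have "\<dots> = (\<Sum>m\<le>M. \<Sum>ns\<in>desc_lists (j m) {lo..N}. f m ns)"
      by (rule sum.Sigma[symmetric]) (simp_all add: finite_desc_lists)
    also have "\<dots> \<le> B"
      by (rule assms(3))
    finally show ?thesis .
  qed
  then have "?g summable_on ?S"
    by (intro nonneg_bdd_above_summable_on bdd_aboveI2) (auto simp: assms(1) case_prod_beta)
  then have "(\<lambda>m. infsum (f m) (desc_lists (j m) {lo..})) summable_on UNIV"
    using summable_on_SigmaD[of ?g UNIV] assms(2) by (simp only: case_prod_conv)
  then show ?thesis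
    by (rule summable_on_imp_summable)
qed

lemma zeta_star_term_summable:
  assumes "admissible_index ks"
  shows "zeta_star_term ks summable_on desc_lists (length ks) {1..}"
proof -
  obtain j where j: "length ks = Suc j"
    using assms by (cases ks) (auto simp: admissible_index_def)
  have "(\<Sum>ns\<in>desc_lists (length ks) {1..N}. zeta_star_term ks ns) \<le> (\<Sum>x. harm x ^ j / real x ^ 2)"
    for N
  proof -
    have "(\<Sum>ns\<in>desc_lists (length ks) {1..N}. zeta_star_term ks ns)
        \<le> (\<Sum>ns\<in>desc_lists (Suc j) {1..N}. zeta_star_term (2 # replicate j 1) ns)"
      unfolding j
    proof (intro sum_mono zeta_star_term_antimono)
      show "(2 # replicate j 1) ! i \<le> ks ! i" if "i < length ks" for i
        using assms that j by (cases ks; cases i) (auto simp: admissible_index_def nth_mem)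
    qed (use j desc_lists_mono[of "{1..N}" "{1..}"] in auto)
    also have "\<dots> \<le> (\<Sum>x=1..N. harm x ^ j / real x ^ 2)"
      unfolding sum_desc_lists_Suc_zeta_star_term
      by (intro sum_mono divide_right_mono sum_desc_lists_recip_le_harm_power) simp
    also have "\<dots> \<le> (\<Sum>x. harm x ^ j / real x ^ 2)"
      by (intro sum_le_suminf summable_harm_power_div_square) (auto simp: harm_nonneg)
    finally show ?thesis .
  qed
  then show ?thesis
    by (intro summable_on_desc_lists_if_bounded zeta_star_term_nonneg)
qed

lemma zeta_star_term_append_one_summable:
  assumes "admissible_index ks"
  shows "zeta_star_term (ks @ [1]) summable_on desc_lists (Suc (length ks)) {1..}"
  using zeta_star_term_summable[of "ks @ [1]"] assms
  by (cases ks) (auto simp: admissible_index_def)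

lemma zeta_star_append_one_minus:
  assumes "admissible_index ks"
  shows "zeta_star (ks @ [1]) - zeta_star ks
    = infsum (zeta_star_term (ks @ [1])) (desc_lists (Suc (length ks)) {2..})"
proof -
  let ?f = "zeta_star_term (ks @ [1])"
  let ?I = "(\<lambda>ns. ns @ [1]) ` desc_lists (length ks) {1..}"
  let ?C = "desc_lists (Suc (length ks)) {2..}"
  have summable: "?f summable_on ?I" "?f summable_on ?C"
    using zeta_star_term_append_one_summable[OF assms]
    unfolding desc_lists_Suc_split_last by (auto elim: summable_on_subset)
  have "zeta_star (ks @ [1]) = infsum ?f (?I \<union> ?C)"
    unfolding zeta_star_eq_infsum_desc_lists length_append_singleton desc_lists_Suc_split_last ..
  also have "\<dots> = infsum ?f ?I + infsum ?f ?C"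
    using summable by (intro infsum_Un_disjoint) (auto simp: desc_lists_def)
  also have "infsum ?f ?I = infsum (?f \<circ> (\<lambda>ns. ns @ [1])) (desc_lists (length ks) {1..})"
    by (rule infsum_reindex) (simp add: inj_on_def)
  also have "\<dots> = zeta_star ks"
    unfolding zeta_star_eq_infsum_desc_lists
  proof (rule infsum_cong)
    fix ns
    assume "ns \<in> desc_lists (length ks) {1..}"
    then have "length ns = length ks"
      by (simp add: desc_lists_def)
    then show "(?f \<circ> (\<lambda>ns. ns @ [1])) ns = zeta_star_term ks ns"
      unfolding comp_def by (rule zeta_star_term_append_one)
  qed
  finally show ?thesis by simp
qed

lemma admissible_index_map_upt:
  "\<forall>i. 1 \<le> k i \<Longrightarrow> 2 \<le> k 0 \<Longrightarrow> 0 < r \<Longrightarrow> admissible_index (map k [0..<r])"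
  by (auto simp: admissible_index_def upt_conv_Cons simp del: upt_Suc)

lemma summable_zeta_star_append_one_minus:
  fixes k :: "nat \<Rightarrow> nat"
  assumes k: "\<forall>i. 1 \<le> k i" "2 \<le> k 0" "4 \<le> k 0 + k (Suc t)"
  shows "summable (\<lambda>m. zeta_star (map k [0..<Suc t + Suc m] @ [1]) - zeta_star (map k [0..<Suc t + Suc m]))"
proof -
  let ?ks = "\<lambda>m. map k [0..<Suc t + Suc m]"
  have admissible: "admissible_index (?ks m)" for m
    using k by (intro admissible_index_map_upt) simp_all
  have "summable (\<lambda>m. infsum (zeta_star_term (?ks m @ [1])) (desc_lists (Suc (Suc t + Suc m)) {2..}))"
  proof (rule summable_infsum_desc_lists_if_bounded)
    show "zeta_star_term (?ks m @ [1]) summable_on desc_lists (Suc (Suc t + Suc m)) {2..}" for m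
      using zeta_star_term_append_one_summable[OF admissible[of m]]
      by (rule summable_on_subset)
        (use desc_lists_mono[of "{2..}" "{1..}"] in \<open>auto simp del: upt_Suc\<close>)
    fix M N
    have "(\<Sum>m\<le>M. \<Sum>ns\<in>desc_lists (Suc (Suc t + Suc m)) {2..N}. zeta_star_term (?ks m @ [1]) ns)
        \<le> (\<Sum>m\<le>M. \<Sum>ns\<in>desc_lists (Suc (Suc t + Suc m)) {2..N}.
          zeta_star_term (2 # replicate t 1 @ 2 # replicate (Suc m) 1) ns)"
      using k desc_lists_mono[of "{2..N}" "{1..}"]
      by (intro sum_mono zeta_star_term_le_two_squares) auto
    also have "\<dots> \<le> (\<Sum>x. harm x ^ Suc t / real x ^ 2)"
      by (rule sum_desc_lists_two_squares_le)
    finally show "(\<Sum>m\<le>M. \<Sum>ns\<in>desc_lists (Suc (Suc t + Suc m)) {2..N}. zeta_star_term (?ks m @ [1]) ns)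
        \<le> (\<Sum>x. harm x ^ Suc t / real x ^ 2)" .
  qed (rule zeta_star_term_nonneg)
  moreover have "zeta_star (?ks m @ [1]) - zeta_star (?ks m)
      = infsum (zeta_star_term (?ks m @ [1])) (desc_lists (Suc (Suc t + Suc m)) {2..})" for m
    using zeta_star_append_one_minus[OF admissible[of m]]
    unfolding length_map length_upt diff_zero .
  ultimately show ?thesis
    by simp
qed

lemma in_T_obtain_pair:
  assumes "in_T k"
  obtains t where "4 \<le> k 0 + k (Suc t)"
proof (cases "k 0 = 2")
  case True
  with assms obtain s where "1 \<le> s" "2 \<le> k s"
    by (auto simp: in_T_def)
  with True show thesis
    by (intro that[of "s - 1"]) auto
next
  case False
  with assms have "3 \<le> k 0" "1 \<le> k 1"
    by (auto simp: in_T_def)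
  with that[of 0] show thesis by simp
qed

theorem lemma3p2:
  fixes k :: "nat \<Rightarrow> nat"
  assumes "in_T k"
  shows "(\<lambda>r. zeta_star (map k [0..<r] @ [1]) - zeta_star (map k [0..<r])) \<longlonglongrightarrow> 0"
proof -
  have k: "\<forall>i. 1 \<le> k i" "2 \<le> k 0"
    using assms by (simp_all add: in_T_def)
  obtain t where t: "4 \<le> k 0 + k (Suc t)"
    using assms by (rule in_T_obtain_pair)
  define \<Delta> where "\<Delta> r = zeta_star (map k [0..<r] @ [1]) - zeta_star (map k [0..<r])" for r
  have "summable (\<lambda>m. \<Delta> (Suc t + Suc m))"
    unfolding \<Delta>_def using k t by (rule summable_zeta_star_append_one_minus)
  then have "(\<lambda>m. \<Delta> (m + Suc (Suc t))) \<longlonglongrightarrow> 0"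
    by (simp add: summable_LIMSEQ_zero add.commute)
  then show ?thesis
    unfolding \<Delta>_def by (rule LIMSEQ_offset)
qed

end
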